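(* Let $G$ be a profinite-$C$ group and let $A$ be a nontrivial abelian closed normal subgroup of $G$. Then $A$ is an internal cartesian product of $G$-invariant subgroups of $A$ of prime order.
   Context: A permutable complement of a subgroup $H$ of a group $G$ is a subgroup $K$ with $G=HK$ and $H\cap K=1$. A profinite group $G$ is a profinite-$C$ group if every closed subgroup of $G$ has a closed permutable complement in $G$. A profinite group $A$ is the internal cartesian product of a family $\{H_i\}_{i\in I}$ of its subgroups if: each $H_i$ is a closed normal subgroup of $A$; $A$ is the topological closure of $\langle H_i\mid i\in I\rangle$; and $\bigcap_{i\in I}\overline{\langle H_j\mid j\ne i\rangle}=1$. *)

theory Defs
  imports "HOL-Analysis.Analysis" "HOL-Algebra.Algebra"
begin

definition topological_group :: "('a, 'b) monoid_scheme \<Rightarrow> 'a topology \<Rightarrow> bool" where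
  "topological_group G T \<longleftrightarrow> group G \<and> topspace T = carrier G \<and>
     continuous_map (prod_topology T T) T (\<lambda>(x, y). x \<otimes>\<^bsub>G\<^esub> y) \<and>
     continuous_map T T (\<lambda>x. inv\<^bsub>G\<^esub> x)"

definition totally_disconnected_space :: "'a topology \<Rightarrow> bool" where
  "totally_disconnected_space T \<longleftrightarrow>
     (\<forall>x \<in> topspace T. connected_component_of_set T x = {x})"

definition profinite_group :: "('a, 'b) monoid_scheme \<Rightarrow> 'a topology \<Rightarrow> bool" where
  "profinite_group G T \<longleftrightarrow> topological_group G T \<and> compact_space T \<and>
     Hausdorff_space T \<and> totally_disconnected_space T"

definition closed_subgroup :: "('a, 'b) monoid_scheme \<Rightarrow> 'a topology \<Rightarrow> 'a set \<Rightarrow> bool" where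
  "closed_subgroup G T H \<longleftrightarrow> subgroup H G \<and> closedin T H"

definition permutable_complement :: "('a, 'b) monoid_scheme \<Rightarrow> 'a set \<Rightarrow> 'a set \<Rightarrow> bool" where
  "permutable_complement G H K \<longleftrightarrow> subgroup K G \<and>
     H <#>\<^bsub>G\<^esub> K = carrier G \<and> H \<inter> K = {\<one>\<^bsub>G\<^esub>}"

definition profinite_C_group :: "('a, 'b) monoid_scheme \<Rightarrow> 'a topology \<Rightarrow> bool" where
  "profinite_C_group G T \<longleftrightarrow> profinite_group G T \<and>
     (\<forall>H. closed_subgroup G T H \<longrightarrow>
        (\<exists>K. closed_subgroup G T K \<and> permutable_complement G H K))"

definition internal_cartesian_product ::
  "('a, 'b) monoid_scheme \<Rightarrow> 'a topology \<Rightarrow> 'a set \<Rightarrow> 'i set \<Rightarrow> ('i \<Rightarrow> 'a set) \<Rightarrow> bool" where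
  "internal_cartesian_product G T A I H \<longleftrightarrow>
     (\<forall>i\<in>I. closedin T (H i) \<and> normal (H i) (G\<lparr>carrier := A\<rparr>)) \<and>
     A = T closure_of (generate G (\<Union>i\<in>I. H i)) \<and>
     (\<Inter>i\<in>I. T closure_of (generate G (\<Union>j\<in>I - {i}. H j))) = {\<one>\<^bsub>G\<^esub>}"

definition G_invariant :: "('a, 'b) monoid_scheme \<Rightarrow> 'a set \<Rightarrow> bool" where
  "G_invariant G H \<longleftrightarrow> (\<forall>g\<in>carrier G. (\<lambda>h. g \<otimes>\<^bsub>G\<^esub> h \<otimes>\<^bsub>G\<^esub> inv\<^bsub>G\<^esub> g) ` H = H)"

end

theory Submission
  imports Defs
begin

(* Closed normal subgroups of G of prime index in A separate the points of A: given d \<noteq> 1 in A,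
   take an open normal subgroup V of G avoiding d and, by Zorn, a normal subgroup L of G maximal
   among those with A \<inter> V \<subseteq> L \<subseteq> A and d \<notin> L. Then L is closed, and since G is a C-group
   and A is abelian, L has a G-invariant closed complement N in A. N meets the open subgroup V
   trivially, so it is finite, and maximality of L forces N to have prime order.
   Now take, by Zorn again, a maximal family \<L> of such subgroups in which no member contains the
   intersection of finitely many others with A; maximality gives A \<inter> \<Inter>\<L> = 1. For L \<in> \<L>, the
   cofactor A \<inter> \<Inter>(\<L> - {L}) is not contained in L (compactness, as A - L is closed), hence it is
   a complement of L in A and has prime order. The cofactors are the required factors: they
   generate a dense subgroup of A, and the closed subgroup generated by all but one of them lies
   in the corresponding L. *)

subsection \<open>Complements of subgroups\<close>

context group begin

lemma inv_cancel_left [simp]: "x \<in> carrier G \<Longrightarrow> y \<in> carrier G \<Longrightarrow> inv x \<otimes> (x \<otimes> y) = y"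
  by (simp add: m_assoc[symmetric])

lemma inv_cancel_right [simp]: "x \<in> carrier G \<Longrightarrow> y \<in> carrier G \<Longrightarrow> x \<otimes> (inv x \<otimes> y) = y"
  by (simp add: m_assoc[symmetric])

lemma set_mult_subset_left: "subgroup K G \<Longrightarrow> H \<subseteq> carrier G \<Longrightarrow> H \<subseteq> H <#> K"
  unfolding set_mult_def by (force dest: subgroup.one_closed)

lemma set_mult_subset_right: "subgroup H G \<Longrightarrow> K \<subseteq> carrier G \<Longrightarrow> K \<subseteq> H <#> K"
  unfolding set_mult_def by (force dest: subgroup.one_closed)

lemma set_mult_subset_subgroup:
  "subgroup A G \<Longrightarrow> H \<subseteq> A \<Longrightarrow> K \<subseteq> A \<Longrightarrow> H <#> K \<subseteq> A"
  unfolding set_mult_def by (auto intro: subgroup.m_closed)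

lemma normal_set_mult:
  assumes N: "N \<lhd> G" and H: "H \<lhd> G"
  shows "N <#> H \<lhd> G"
proof (rule normal_invI)
  show "subgroup (N <#> H) G"
    using mult_norm_subgroup[OF N normal_imp_subgroup[OF H]] .
  fix g x assume g: "g \<in> carrier G" and "x \<in> N <#> H"
  then obtain n h where nh: "n \<in> N" "h \<in> H" "x = n \<otimes> h"
    unfolding set_mult_def by blast
  have c: "n \<in> carrier G" "h \<in> carrier G"
    using nh N H by (auto dest: normal_imp_subgroup subgroup.mem_carrier)
  have "g \<otimes> x \<otimes> inv g = (g \<otimes> n \<otimes> inv g) \<otimes> (g \<otimes> h \<otimes> inv g)"
    using g c nh(3) by (simp add: m_assoc)
  moreover have "g \<otimes> n \<otimes> inv g \<in> N" "g \<otimes> h \<otimes> inv g \<in> H"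
    using g nh N H by (auto intro: normal.inv_op_closed2)
  ultimately show "g \<otimes> x \<otimes> inv g \<in> N <#> H"
    unfolding set_mult_def by blast
qed

lemma set_mult_Int_modular:
  assumes N: "subgroup N G" and "B \<subseteq> N" "K \<subseteq> carrier G" "N \<subseteq> B <#> K"
  shows "N \<subseteq> B <#> (N \<inter> K)"
proof
  fix n assume n: "n \<in> N"
  then obtain x k where xk: "x \<in> B" "k \<in> K" "n = x \<otimes> k"
    using assms(4) unfolding set_mult_def by blast
  have x: "x \<in> N" "x \<in> carrier G"
    using xk(1) assms(2) N by (auto dest: subgroup.mem_carrier)
  have "k = inv x \<otimes> n"
    using xk assms(3) x(2) by (auto simp: m_assoc[symmetric])
  then have "k \<in> N"
    using n x(1) N by (simp add: subgroup.m_closed subgroup.m_inv_closed)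
  then show "n \<in> B <#> (N \<inter> K)"
    using xk unfolding set_mult_def by blast
qed

lemma set_mult_Int_trivial:
  assumes N: "subgroup N G" and "B \<subseteq> N" "K \<subseteq> carrier G" "N \<subseteq> B <#> K" "N \<inter> K \<subseteq> {\<one>}"
  shows "N \<subseteq> B"
proof -
  have B: "B \<subseteq> carrier G" using assms(2) subgroup.subset[OF N] by blast
  have "N \<subseteq> B <#> (N \<inter> K)" using set_mult_Int_modular[OF assms(1-4)] .
  also have "\<dots> \<subseteq> B <#> {\<one>}" using assms(5) by (intro mono_set_mult) auto
  also have "\<dots> = B" using coset_mult_one[OF B] by (simp add: r_coset_eq_set_mult)
  finally show ?thesis .
qed

lemma set_mult_Int_complement:
  assumes L: "subgroup L G" and N: "subgroup N G" and LN: "L \<inter> N \<subseteq> {\<one>}"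
    and "Y1 \<subseteq> N" "Y2 \<subseteq> N"
  shows "(L <#> Y1) \<inter> (L <#> Y2) \<subseteq> L <#> (Y1 \<inter> Y2)"
proof
  fix x assume "x \<in> (L <#> Y1) \<inter> (L <#> Y2)"
  then obtain l1 y1 l2 y2 where ly: "l1 \<in> L" "y1 \<in> Y1" "l2 \<in> L" "y2 \<in> Y2"
    "x = l1 \<otimes> y1" "x = l2 \<otimes> y2"
    unfolding set_mult_def by blast
  have y: "y1 \<in> N" "y2 \<in> N" using ly assms(4,5) by auto
  have c: "l1 \<in> carrier G" "l2 \<in> carrier G" "y1 \<in> carrier G" "y2 \<in> carrier G"
    using ly y L N by (auto dest: subgroup.mem_carrier)
  have "inv l2 \<otimes> l1 = y2 \<otimes> inv y1"
    using ly(5,6) c by (metis inv_solve_left inv_solve_right m_assoc m_closed inv_closed)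
  moreover have "inv l2 \<otimes> l1 \<in> L" "y2 \<otimes> inv y1 \<in> N"
    using ly y L N by (auto intro: subgroup.m_closed subgroup.m_inv_closed)
  ultimately have "y2 \<otimes> inv y1 = \<one>" using LN by auto
  then have "y1 = y2"
    using c by (metis inv_equality inv_inv inv_closed)
  then show "x \<in> L <#> (Y1 \<inter> Y2)"
    using ly unfolding set_mult_def by blast
qed

lemma subgroup_of_prime_card:
  assumes N: "subgroup N G" "Factorial_Ring.prime (card N)" and H: "subgroup H G" "H \<subseteq> N"
  shows "H = {\<one>} \<or> H = N"
proof -
  interpret N: group "G\<lparr>carrier := N\<rparr>"
    using subgroup_imp_group[OF N(1)] .
  have "card (rcosets\<^bsub>G\<lparr>carrier := N\<rparr>\<^esub> H) * card H = card N"
    using N.lagrange[OF subgroup_incl[OF H(1) N(1) H(2)]] by (simp add: order_def)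
  then have "card H dvd card N" by (metis dvd_triv_right)
  then have "card H = 1 \<or> card H = card N"
    using N(2) prime_nat_iff by blast
  moreover have "finite N"
    using N(2) card_ge_0_finite prime_gt_0_nat by blast
  ultimately show ?thesis
    using subgroup.one_closed[OF H(1)] card_subset_eq[OF _ H(2)] by (auto simp: card_1_singleton_iff)
qed

lemma prime_card_if_subgroups_trivial:
  assumes N: "subgroup N G" "finite N" "N \<noteq> {\<one>}"
    and trivial: "\<And>H. subgroup H G \<Longrightarrow> H \<subseteq> N \<Longrightarrow> H = {\<one>} \<or> H = N"
  shows "Factorial_Ring.prime (card N)"
proof -
  obtain x where x: "x \<in> N" "x \<noteq> \<one>"
    using N(3) subgroup.one_closed[OF N(1)] by blast
  have xc: "x \<in> carrier G" using subgroup.mem_carrier[OF N(1) x(1)] .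
  have cyclic: "generate G {y} = {\<one>} \<or> generate G {y} = N" if "y \<in> N" for y
    using trivial[OF generate_is_subgroup] generate_subgroup_incl[of "{y}" N] that N(1)
      subgroup.mem_carrier[OF N(1)] by simp
  have "generate G {x} \<noteq> {\<one>}"
    using x(2) generate.incl[of x "{x}" G] by blast
  then have card_N: "card N = ord x"
    using cyclic[OF x(1)] generate_pow_card[OF xc] by simp
  have "ord x \<noteq> 1" using ord_eq_1[OF xc] x(2) by simp
  moreover have "ord x \<noteq> 0" using card_N N(2) subgroup.one_closed[OF N(1)] card_0_eq by force
  ultimately have gt1: "1 < ord x" by simp
  show ?thesis
    unfolding card_N prime_nat_iff
  proof (intro conjI allI impI gt1)
    fix m assume m: "m dvd ord x"
    then have m_pos: "0 < m" using gt1 by (cases m) auto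
    have "card (generate G {x [^] m}) = ord x div m"
      using ord_pow_gen[OF xc, of m] generate_pow_card[of "x [^] m"] xc m m_pos
      by (simp add: gcd_nat.absorb2)
    moreover have "x [^] m \<in> N"
      using subgroup_int_pow_closed[OF N(1) x(1), of "int m"] by (simp add: int_pow_int)
    ultimately have "ord x div m = 1 \<or> ord x div m = ord x"
      using cyclic[of "x [^] m"] card_N by auto
    then show "m = 1 \<or> m = ord x"
    proof
      assume "ord x div m = 1"
      then show ?thesis using m by (metis dvd_mult_div_cancel mult_1_right)
    next
      assume "ord x div m = ord x"
      then have "m * ord x = 1 * ord x" using m by (metis dvd_mult_div_cancel mult_1)
      then show ?thesis using gt1 by simp
    qed
  qed
qed

lemma card_le_of_complement:
  assumes L: "subgroup L G" and M: "subgroup M G" "M \<inter> L \<subseteq> {\<one>}" "M \<subseteq> L <#> N"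
    and N: "N \<subseteq> carrier G" "finite N"
  shows "finite M \<and> card M \<le> card N"
proof -
  have inj: "inj_on (\<lambda>x. L #> x) M"
  proof (rule inj_onI)
    fix x y assume xy: "x \<in> M" "y \<in> M" "L #> x = L #> y"
    have c: "x \<in> carrier G" "y \<in> carrier G" using xy M(1) by (auto dest: subgroup.mem_carrier)
    have "y \<in> L #> x" using xy(3) rcos_self[OF c(2) L] by simp
    then have "y \<otimes> inv x \<in> L"
      by (rule subgroup.rcos_module_imp[OF L is_group c(1)])
    moreover have "y \<otimes> inv x \<in> M"
      using xy M(1) by (simp add: subgroup.m_closed subgroup.m_inv_closed)
    ultimately have "y \<otimes> inv x = \<one>" using M(2) by blast
    then show "x = y" using inv_solve_right'[OF one_closed c(2,1)] c by simp
  qed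
  have cosets: "(\<lambda>x. L #> x) ` M \<subseteq> (\<lambda>x. L #> x) ` N"
  proof
    fix C assume "C \<in> (\<lambda>x. L #> x) ` M"
    then obtain m where m: "m \<in> M" "C = L #> m" by blast
    then obtain l n where ln: "l \<in> L" "n \<in> N" "C = L #> (l \<otimes> n)"
      using M(3) unfolding set_mult_def by auto
    have "l \<in> carrier G" "n \<in> carrier G"
      using ln L N(1) subgroup.mem_carrier by auto
    then have "L #> (l \<otimes> n) = (L #> l) #> n"
      using coset_mult_assoc[OF subgroup.subset[OF L]] by simp
    then have "C = L #> n"
      using ln(3) subgroup.rcos_const[OF L is_group ln(1)] by simp
    then show "C \<in> (\<lambda>x. L #> x) ` N" using ln(2) by blast
  qed
  moreover have fin: "finite ((\<lambda>x. L #> x) ` N)" using N(2) by simp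
  ultimately have "finite ((\<lambda>x. L #> x) ` M)" by (rule finite_subset)
  moreover have "card ((\<lambda>x. L #> x) ` M) \<le> card N"
    using card_mono[OF fin cosets] card_image_le[OF N(2), of "\<lambda>x. L #> x"] by linarith
  ultimately show ?thesis using finite_imageD[OF _ inj] card_image[OF inj] by simp
qed

lemma prime_complement_maximal:
  assumes N: "subgroup N G" "Factorial_Ring.prime (card N)" and L: "subgroup L G"
    and A: "A \<subseteq> N <#> L"
    and P: "subgroup P G" "L \<subseteq> P" "P \<subseteq> A" "\<not> P \<subseteq> L"
  shows "P = A"
proof -
  obtain p where p: "p \<in> P" "p \<notin> L" using P(4) by blast
  then obtain n l where nl: "n \<in> N" "l \<in> L" "p = n \<otimes> l"
    using A P(3) unfolding set_mult_def by blast
  have c: "n \<in> carrier G" "l \<in> carrier G"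
    using nl N(1) L by (auto dest: subgroup.mem_carrier)
  have "n = p \<otimes> inv l" using nl(3) c by (simp add: m_assoc)
  moreover have "p \<otimes> inv l \<in> P"
    using nl(2) P(2) subgroup.m_closed[OF P(1) p(1) subgroup.m_inv_closed[OF P(1)]] by blast
  ultimately have "n \<in> N \<inter> P" using nl(1) by simp
  moreover have "n \<noteq> \<one>" using nl p(2) c by auto
  ultimately have "N \<inter> P = N"
    using subgroup_of_prime_card[OF N subgroups_Inter_pair[OF N(1) P(1)]] by blast
  then have "N <#> L \<subseteq> P"
    using set_mult_subset_subgroup[OF P(1)] P(2) by blast
  then show ?thesis using A P(3) by blast
qed

lemma generate_right_stable:
  assumes C: "C \<subseteq> carrier G" and S: "S \<subseteq> carrier G"
    and stable: "\<And>c s. c \<in> C \<Longrightarrow> s \<in> S \<Longrightarrow> c \<otimes> s \<in> C \<and> c \<otimes> inv s \<in> C"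
    and x: "x \<in> generate G S"
  shows "\<forall>c\<in>C. c \<otimes> x \<in> C"
  using x
proof (induction x rule: generate.induct)
  case one
  then show ?case using C by auto
next
  case (incl s)
  then show ?case using stable by blast
next
  case (inv s)
  then show ?case using stable by blast
next
  case (eng x y)
  have "x \<in> carrier G" "y \<in> carrier G"
    using eng.hyps generate_in_carrier[OF S] by auto
  then show ?case
    using eng.IH C by (auto simp: m_assoc[symmetric] subset_iff)
qed

lemma normal_generate_conjugates:
  assumes Q: "Q \<subseteq> carrier G"
  shows "generate G {g \<otimes> q \<otimes> inv g | g q. g \<in> carrier G \<and> q \<in> Q} \<lhd> G"
proof (rule normal_generateI)
  show "{g \<otimes> q \<otimes> inv g | g q. g \<in> carrier G \<and> q \<in> Q} \<subseteq> carrier G" using Q by auto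
  fix s g assume "s \<in> {g \<otimes> q \<otimes> inv g | g q. g \<in> carrier G \<and> q \<in> Q}" and g: "g \<in> carrier G"
  then obtain h q where hq: "h \<in> carrier G" "q \<in> Q" "s = h \<otimes> q \<otimes> inv h" by blast
  then have "g \<otimes> s \<otimes> inv g = (g \<otimes> h) \<otimes> q \<otimes> inv (g \<otimes> h)"
    using g Q by (auto simp: m_assoc inv_mult_group)
  then show "g \<otimes> s \<otimes> inv g \<in> {g \<otimes> q \<otimes> inv g | g q. g \<in> carrier G \<and> q \<in> Q}"
    using g hq(1,2) by blast
qed

lemma normal_imp_G_invariant:
  assumes "H \<lhd> G"
  shows "G_invariant G H"
  unfolding G_invariant_def
proof (intro ballI equalityI subsetI)
  fix g x assume "g \<in> carrier G" "x \<in> (\<lambda>h. g \<otimes> h \<otimes> inv g) ` H"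
  then show "x \<in> H" using normal.inv_op_closed2[OF assms] by blast
next
  fix g h assume g: "g \<in> carrier G" and h: "h \<in> H"
  have "h \<in> carrier G" using h subgroup.mem_carrier[OF normal_imp_subgroup[OF assms]] by blast
  then have "h = g \<otimes> (inv g \<otimes> h \<otimes> inv (inv g)) \<otimes> inv g" using g by (simp add: m_assoc)
  moreover have "inv g \<otimes> h \<otimes> inv (inv g) \<in> H"
    using normal.inv_op_closed2[OF assms inv_closed[OF g] h] .
  ultimately show "h \<in> (\<lambda>h. g \<otimes> h \<otimes> inv g) ` H" by (rule image_eqI)
qed

lemma normal_Union_chain:
  assumes "\<C> \<noteq> {}" and normal: "\<And>L. L \<in> \<C> \<Longrightarrow> L \<lhd> G" and "subset.chain \<A> \<C>"
  shows "\<Union>\<C> \<lhd> G"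
proof (rule normal_invI)
  have sub: "subgroup L G" if "L \<in> \<C>" for L using normal_imp_subgroup[OF normal[OF that]] .
  show "subgroup (\<Union>\<C>) G"
  proof (rule subgroupI)
    show "\<Union>\<C> \<subseteq> carrier G" using subgroup.subset[OF sub] by blast
    show "\<Union>\<C> \<noteq> {}" using assms(1) subgroup.one_closed[OF sub] by blast
    show "inv a \<in> \<Union>\<C>" if a: "a \<in> \<Union>\<C>" for a
    proof -
      obtain L where "L \<in> \<C>" "a \<in> L" using a by blast
      then show ?thesis using subgroup.m_inv_closed[OF sub] by blast
    qed
    show "a \<otimes> b \<in> \<Union>\<C>" if ab: "a \<in> \<Union>\<C>" "b \<in> \<Union>\<C>" for a b
    proof -
      obtain La Lb where L: "La \<in> \<C>" "Lb \<in> \<C>" "a \<in> La" "b \<in> Lb" using ab by blast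
      have "La \<subseteq> Lb \<or> Lb \<subseteq> La"
        using assms(3) L(1,2) unfolding subset_chain_def by blast
      then show ?thesis
        using L subgroup.m_closed[OF sub[OF L(1)], of a b] subgroup.m_closed[OF sub[OF L(2)], of a b]
        by blast
    qed
  qed
  show "x \<otimes> h \<otimes> inv x \<in> \<Union>\<C>" if x: "x \<in> carrier G" and h: "h \<in> \<Union>\<C>" for x h
  proof -
    obtain L where L: "L \<in> \<C>" "h \<in> L" using h by blast
    then show ?thesis using normal.inv_op_closed2[OF normal[OF L(1)] x L(2)] by blast
  qed
qed

lemma exists_maximal_normal_avoiding:
  assumes U: "U \<lhd> G" "U \<subseteq> A" "d \<notin> U"
  obtains L where "L \<lhd> G" "U \<subseteq> L" "L \<subseteq> A" "d \<notin> L"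
    "\<And>L'. L' \<lhd> G \<Longrightarrow> L \<subseteq> L' \<Longrightarrow> L' \<subseteq> A \<Longrightarrow> d \<notin> L' \<Longrightarrow> L' = L"
proof -
  let ?\<Z> = "{L. L \<lhd> G \<and> U \<subseteq> L \<and> L \<subseteq> A \<and> d \<notin> L}"
  have "\<exists>L\<in>?\<Z>. \<forall>L'\<in>?\<Z>. L \<subseteq> L' \<longrightarrow> L' = L"
  proof (rule subset_Zorn_nonempty)
    show "?\<Z> \<noteq> {}" using U by blast
    fix \<C> assume \<C>: "\<C> \<noteq> {}" "subset.chain ?\<Z> \<C>"
    then have "\<C> \<subseteq> ?\<Z>" unfolding subset_chain_def by blast
    then have "\<Union>\<C> \<lhd> G" using normal_Union_chain[OF \<C>(1) _ \<C>(2)] by blast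
    moreover have "U \<subseteq> \<Union>\<C>" "\<Union>\<C> \<subseteq> A" "d \<notin> \<Union>\<C>"
      using \<C>(1) \<open>\<C> \<subseteq> ?\<Z>\<close> by auto
    ultimately show "\<Union>\<C> \<in> ?\<Z>" by simp
  qed
  then obtain L where "L \<in> ?\<Z>" and "\<forall>L'\<in>?\<Z>. L \<subseteq> L' \<longrightarrow> L' = L" by blast
  then show ?thesis by (intro that) auto
qed

lemma complement_normal_subgroups_meet:
  assumes A: "subgroup A G"
    and L: "L \<lhd> G" "L \<subseteq> A" "d \<notin> L"
    and L_max: "\<And>L'. L' \<lhd> G \<Longrightarrow> L \<subseteq> L' \<Longrightarrow> L' \<subseteq> A \<Longrightarrow> d \<notin> L' \<Longrightarrow> L' = L"
    and N: "subgroup N G" "N \<subseteq> A" "L \<inter> N = {\<one>}"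
    and Y: "Y1 \<lhd> G" "Y2 \<lhd> G" "Y1 \<subseteq> N" "Y2 \<subseteq> N" "Y1 \<inter> Y2 = {\<one>}"
  shows "Y1 = {\<one>} \<or> Y2 = {\<one>}"
proof -
  have L_subgroup: "subgroup L G" using normal_imp_subgroup[OF L(1)] .
  have d_mem_set_mult: "d \<in> L <#> Y" if Y: "Y \<lhd> G" "Y \<subseteq> N" "Y \<noteq> {\<one>}" for Y
  proof (rule ccontr)
    assume "d \<notin> L <#> Y"
    moreover have "L <#> Y \<subseteq> A"
      using set_mult_subset_subgroup[OF A L(2)] Y(2) N(2) by blast
    moreover have "L \<subseteq> L <#> Y"
      using set_mult_subset_left[OF normal_imp_subgroup[OF Y(1)] subgroup.subset[OF L_subgroup]] .
    ultimately have "L <#> Y = L" using L_max[OF normal_set_mult[OF L(1) Y(1)]] by blast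
    moreover have "Y \<subseteq> L <#> Y"
      using set_mult_subset_right[OF L_subgroup subgroup.subset[OF normal_imp_subgroup[OF Y(1)]]] .
    ultimately have "Y \<subseteq> L \<inter> N" using Y(2) by blast
    then show False using Y(3) N(3) subgroup.one_closed[OF normal_imp_subgroup[OF Y(1)]] by blast
  qed
  show ?thesis
  proof (rule ccontr)
    assume "\<not> (Y1 = {\<one>} \<or> Y2 = {\<one>})"
    then have "d \<in> (L <#> Y1) \<inter> (L <#> Y2)" using d_mem_set_mult Y(1-4) by blast
    also have "\<dots> \<subseteq> L <#> (Y1 \<inter> Y2)"
      using set_mult_Int_complement[OF L_subgroup N(1)] N(3) Y(3,4) by blast
    also have "\<dots> = L"
      using Y(5) coset_mult_one[OF subgroup.subset[OF L_subgroup]] by (simp add: r_coset_eq_set_mult)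
    finally show False using L(3) by blast
  qed
qed

end

definition has_prime_complement :: "('a, 'b) monoid_scheme \<Rightarrow> 'a set \<Rightarrow> 'a set \<Rightarrow> bool" where
  "has_prime_complement G A L \<longleftrightarrow>
     (\<exists>N. subgroup N G \<and> Factorial_Ring.prime (card N) \<and> N \<inter> L = {\<one>\<^bsub>G\<^esub>} \<and> N <#>\<^bsub>G\<^esub> L = A)"

context group begin

lemma subgroup_Int_maximal:
  assumes L: "L \<lhd> G" "has_prime_complement G A L" and A: "subgroup A G"
    and B: "subgroup B G" "B \<subseteq> A"
    and Y: "subgroup Y G" "B \<inter> L \<subseteq> Y" "Y \<subseteq> B" "\<not> Y \<subseteq> L"
  shows "Y = B"
proof -
  obtain N where N: "subgroup N G" "Factorial_Ring.prime (card N)" "N <#> L = A"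
    using L(2) unfolding has_prime_complement_def by blast
  have sL: "subgroup L G" using normal_imp_subgroup[OF L(1)] .
  have "L <#> Y = A"
  proof (rule prime_complement_maximal[OF N(1,2) sL])
    show "subgroup (L <#> Y) G" using mult_norm_subgroup[OF L(1) Y(1)] .
    show "L \<subseteq> L <#> Y"
      using set_mult_subset_left[OF Y(1)] subgroup.subset[OF sL] .
    show "L <#> Y \<subseteq> A"
      using set_mult_subset_subgroup[OF A] set_mult_subset_right[OF N(1) subgroup.subset[OF sL]]
        N(3) Y(3) B(2) by blast
    show "\<not> L <#> Y \<subseteq> L"
      using set_mult_subset_right[OF sL subgroup.subset[OF Y(1)]] Y(4) by blast
  qed (use N(3) in simp)
  then have "B \<subseteq> Y <#> L" using B(2) commut_normal[OF Y(1) L(1)] by simp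
  then have "B \<subseteq> Y <#> (B \<inter> L)"
    using set_mult_Int_modular[OF B(1) Y(3) subgroup.subset[OF sL]] by blast
  also have "\<dots> \<subseteq> Y <#> Y" using Y(2) by (intro mono_set_mult) auto
  also have "\<dots> = Y" using subgroup_mult_id[OF Y(1)] .
  finally show ?thesis using Y(3) by blast
qed

end

subsection \<open>Profinite groups\<close>

lemma compact_space_Inter_subset_openin:
  assumes "compact_space T" "closedin T K" "\<And>C. C \<in> \<F> \<Longrightarrow> closedin T C"
    and "openin T U" "K \<inter> \<Inter>\<F> \<subseteq> U"
  obtains F where "finite F" "F \<subseteq> \<F>" "K \<inter> \<Inter>F \<subseteq> U"
proof -
  let ?\<U> = "insert K (insert (topspace T - U) \<F>)"
  have "\<forall>C\<in>?\<U>. closedin T C" using assms(2,3,4) by blast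
  moreover have "\<Inter>?\<U> = {}" using assms(5) by blast
  ultimately have "\<not> (\<forall>F. finite F \<and> F \<subseteq> ?\<U> \<longrightarrow> \<Inter>F \<noteq> {})"
    using assms(1)[unfolded compact_space_fip, rule_format, of ?\<U>] by blast
  then obtain F0 where F0: "finite F0" "F0 \<subseteq> ?\<U>" "\<Inter>F0 = {}" by blast
  have "K \<inter> \<Inter>(F0 \<inter> \<F>) \<subseteq> U"
  proof
    fix z assume z: "z \<in> K \<inter> \<Inter>(F0 \<inter> \<F>)"
    show "z \<in> U"
    proof (rule ccontr)
      assume "z \<notin> U"
      moreover have "z \<in> topspace T" using z closedin_subset[OF assms(2)] by blast
      ultimately have "z \<in> \<Inter>F0" using z F0(2) by blast
      then show False using F0(3) by blast
    qed
  qed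
  then show ?thesis using that F0(1) by blast
qed

locale profinite =
  fixes G :: "('a, 'b) monoid_scheme" (structure) and T :: "'a topology"
  assumes profinite: "profinite_group G T"

sublocale profinite \<subseteq> group G
  using profinite unfolding profinite_group_def topological_group_def by blast

context profinite begin

lemma topspace_eq [simp]: "topspace T = carrier G"
  using profinite unfolding profinite_group_def topological_group_def by blast

lemma compact_space: "compact_space T"
  using profinite unfolding profinite_group_def by blast

lemma continuous_map_mult:
  assumes "continuous_map Z T f" "continuous_map Z T g"
  shows "continuous_map Z T (\<lambda>x. f x \<otimes> g x)"
proof -
  have "continuous_map (prod_topology T T) T (\<lambda>(x, y). x \<otimes> y)"
    using profinite unfolding profinite_group_def topological_group_def by blast
  from continuous_map_compose[OF continuous_map_pairedI[OF assms] this] show ?thesis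
    by (simp add: o_def)
qed

lemma continuous_map_inv:
  assumes "continuous_map Z T f"
  shows "continuous_map Z T (\<lambda>x. inv (f x))"
proof -
  have "continuous_map T T (\<lambda>x. inv x)"
    using profinite unfolding profinite_group_def topological_group_def by blast
  from continuous_map_compose[OF assms this] show ?thesis by (simp add: o_def)
qed

lemma continuous_map_lmult: "a \<in> carrier G \<Longrightarrow> continuous_map T T ((\<otimes>) a)"
  using continuous_map_mult[of T "\<lambda>_. a" "\<lambda>x. x"] by simp

lemma lmult_image_eq:
  assumes "a \<in> carrier G" "U \<subseteq> carrier G"
  shows "(\<otimes>) a ` U = {x \<in> topspace T. inv a \<otimes> x \<in> U}"
proof
  show "(\<otimes>) a ` U \<subseteq> {x \<in> topspace T. inv a \<otimes> x \<in> U}"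
    using assms by auto
  show "{x \<in> topspace T. inv a \<otimes> x \<in> U} \<subseteq> (\<otimes>) a ` U"
  proof
    fix x assume "x \<in> {x \<in> topspace T. inv a \<otimes> x \<in> U}"
    then have "inv a \<otimes> x \<in> U" "x = a \<otimes> (inv a \<otimes> x)" using assms(1) by auto
    then show "x \<in> (\<otimes>) a ` U" by blast
  qed
qed

lemma openin_lmult_image: "a \<in> carrier G \<Longrightarrow> openin T U \<Longrightarrow> openin T ((\<otimes>) a ` U)"
  using lmult_image_eq[OF _ openin_subset[of T U, simplified]]
    openin_continuous_map_preimage[OF continuous_map_lmult[of "inv a"]] by simp

lemma closedin_lmult_image: "a \<in> carrier G \<Longrightarrow> closedin T U \<Longrightarrow> closedin T ((\<otimes>) a ` U)"
  using lmult_image_eq[OF _ closedin_subset[of T U, simplified]]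
    closedin_continuous_map_preimage[OF continuous_map_lmult[of "inv a"]] by simp

lemma closedin_finite: "finite S \<Longrightarrow> S \<subseteq> carrier G \<Longrightarrow> closedin T S"
proof -
  have "t1_space T"
    using profinite Hausdorff_imp_t1_space unfolding profinite_group_def by blast
  then show "finite S \<Longrightarrow> S \<subseteq> carrier G \<Longrightarrow> closedin T S"
    unfolding t1_space_closedin_finite by simp
qed

lemma clopen_nbhd_avoiding:
  assumes d: "d \<in> carrier G" "d \<noteq> \<one>"
  obtains C where "closedin T C" "openin T C" "\<one> \<in> C" "d \<notin> C"
proof -
  have "connected_component_of_set T \<one> = {\<one>}"
    using profinite unfolding profinite_group_def totally_disconnected_space_def by simp
  moreover have "quasi_component_of T \<one> = connected_component_of T \<one>"
    using profinite unfolding profinite_group_def by (intro quasi_eq_connected_component_of) simp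
  ultimately have "\<not> quasi_component_of T \<one> d" using d(2) by auto
  then obtain S where S: "closedin T S" "openin T S" "\<not> (\<one> \<in> S \<longleftrightarrow> d \<in> S)"
    using d(1) unfolding quasi_component_of_def by auto
  show ?thesis
  proof (cases "\<one> \<in> S")
    case True
    then show ?thesis using S that by blast
  next
    case False
    have "closedin T (topspace T - S)" "openin T (topspace T - S)"
      using closedin_diff[OF closedin_topspace S(2)] openin_diff[OF openin_topspace S(1)] .
    then show ?thesis using that S(3) False d(1) by simp
  qed
qed

lemma conjugation_stable_nbhd:
  assumes C: "closedin T C" "openin T C"
  obtains Q where "openin T Q" "\<one> \<in> Q" "\<And>q. q \<in> Q \<Longrightarrow> inv q \<in> Q"
    "\<And>c g q. c \<in> C \<Longrightarrow> g \<in> carrier G \<Longrightarrow> q \<in> Q \<Longrightarrow> c \<otimes> (g \<otimes> q \<otimes> inv g) \<in> C"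
proof -
  have C_carrier: "C \<subseteq> carrier G" using closedin_subset[OF C(1)] by simp
  define P where "P = prod_topology (prod_topology T T) T"
  define f where "f z = fst (fst z) \<otimes> (snd (fst z) \<otimes> snd z \<otimes> inv (snd (fst z)))"
    for z :: "('a \<times> 'a) \<times> 'a"
  have "continuous_map P T (\<lambda>z. fst (fst z))" "continuous_map P T (\<lambda>z. snd (fst z))"
    "continuous_map P T snd"
    using continuous_map_compose[OF continuous_map_fst continuous_map_fst]
      continuous_map_compose[OF continuous_map_fst continuous_map_snd] continuous_map_snd
    unfolding P_def o_def by blast+
  then have "continuous_map P T f"
    unfolding f_def by (intro continuous_map_mult continuous_map_inv)
  then have W: "openin P {z \<in> topspace P. f z \<in> C}"
    using openin_continuous_map_preimage C(2) by blast
  have "compactin (prod_topology T T) (C \<times> carrier G)"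
    using closedin_compact_space[OF compact_space C(1)] compact_space
    by (simp add: compactin_Times compact_space_def)
  moreover have "(C \<times> carrier G) \<times> {\<one>} \<subseteq> {z \<in> topspace P. f z \<in> C}"
    using C_carrier by (auto simp: P_def f_def subset_iff)
  ultimately obtain U Q0 where Q0: "openin T Q0" "\<one> \<in> Q0" "C \<times> carrier G \<subseteq> U"
    "U \<times> Q0 \<subseteq> {z \<in> topspace P. f z \<in> C}"
    using tube_lemma_left[OF W[unfolded P_def], of "C \<times> carrier G" \<one>] unfolding P_def by auto
  have Q0_stable: "c \<otimes> (g \<otimes> q \<otimes> inv g) \<in> C" if "c \<in> C" "g \<in> carrier G" "q \<in> Q0" for c g q
  proof -
    have "((c, g), q) \<in> {z \<in> topspace P. f z \<in> C}" using Q0(3,4) that by blast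
    then show ?thesis by (simp add: f_def)
  qed
  define Q where "Q = Q0 \<inter> {q \<in> topspace T. inv q \<in> Q0}"
  show ?thesis
  proof (rule that)
    show "openin T Q"
      unfolding Q_def using openin_Int[OF Q0(1) openin_continuous_map_preimage[OF
          continuous_map_inv[OF continuous_map_id[unfolded id_def]] Q0(1)]] .
    show "\<one> \<in> Q" using Q0(2) by (simp add: Q_def)
    show "inv q \<in> Q" if "q \<in> Q" for q
      using that openin_subset[OF Q0(1)] by (auto simp: Q_def)
    show "c \<otimes> (g \<otimes> q \<otimes> inv g) \<in> C" if "c \<in> C" "g \<in> carrier G" "q \<in> Q" for c g q
      using Q0_stable that by (simp add: Q_def)
  qed
qed

lemma openin_subgroupI:
  assumes V: "subgroup V G" and Q: "openin T Q" "\<one> \<in> Q" "Q \<subseteq> V"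
  shows "openin T V"
proof (subst openin_subopen, intro ballI)
  fix x assume x: "x \<in> V"
  then have xc: "x \<in> carrier G" using subgroup.mem_carrier[OF V] by blast
  have "openin T ((\<otimes>) x ` Q)" using openin_lmult_image[OF xc Q(1)] .
  moreover have "x \<in> (\<otimes>) x ` Q" using Q(2) xc by (intro rev_image_eqI[of \<one>]) auto
  moreover have "(\<otimes>) x ` Q \<subseteq> V" using Q(3) x subgroup.m_closed[OF V] by blast
  ultimately show "\<exists>U. openin T U \<and> x \<in> U \<and> U \<subseteq> V" by blast
qed

lemma open_normal_subgroup_avoiding:
  assumes d: "d \<in> carrier G" "d \<noteq> \<one>"
  obtains V where "V \<lhd> G" "openin T V" "d \<notin> V"
proof -
  obtain C where C: "closedin T C" "openin T C" "\<one> \<in> C" "d \<notin> C"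
    using clopen_nbhd_avoiding[OF d] by blast
  obtain Q where Q: "openin T Q" "\<one> \<in> Q" "\<And>q. q \<in> Q \<Longrightarrow> inv q \<in> Q"
    "\<And>c g q. c \<in> C \<Longrightarrow> g \<in> carrier G \<Longrightarrow> q \<in> Q \<Longrightarrow> c \<otimes> (g \<otimes> q \<otimes> inv g) \<in> C"
    using conjugation_stable_nbhd[OF C(1,2)] by blast
  have Q_carrier: "Q \<subseteq> carrier G" using openin_subset[OF Q(1)] by simp
  have C_carrier: "C \<subseteq> carrier G" using openin_subset[OF C(2)] by simp
  define S where "S = {g \<otimes> q \<otimes> inv g | g q. g \<in> carrier G \<and> q \<in> Q}"
  have S_carrier: "S \<subseteq> carrier G" using Q_carrier unfolding S_def by auto
  have Q_S: "Q \<subseteq> S"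
  proof
    fix q assume "q \<in> Q"
    moreover have "q = \<one> \<otimes> q \<otimes> inv \<one>" using calculation Q_carrier by auto
    ultimately show "q \<in> S" unfolding S_def by blast
  qed
  have normal: "generate G S \<lhd> G"
    unfolding S_def using normal_generate_conjugates[OF Q_carrier] .
  have "\<forall>c\<in>C. c \<otimes> x \<in> C" if "x \<in> generate G S" for x
  proof (rule generate_right_stable[OF C_carrier S_carrier _ that])
    fix c s assume c: "c \<in> C" and "s \<in> S"
    then obtain g q where gq: "g \<in> carrier G" "q \<in> Q" "s = g \<otimes> q \<otimes> inv g"
      unfolding S_def by blast
    then have "inv s = g \<otimes> inv q \<otimes> inv g"
      using Q_carrier by (auto simp: inv_mult_group m_assoc)
    then show "c \<otimes> s \<in> C \<and> c \<otimes> inv s \<in> C"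
      using Q(3,4) c gq by simp
  qed
  then have "generate G S \<subseteq> C"
    using C(3) generate_in_carrier[OF S_carrier] by (metis l_one subsetI)
  moreover have "Q \<subseteq> generate G S"
    using Q_S generate.incl[of _ S G] by blast
  then have "openin T (generate G S)"
    using openin_subgroupI[OF generate_is_subgroup[OF S_carrier] Q(1,2)] by blast
  ultimately show ?thesis using that normal C(4) by blast
qed

lemma closedin_subgroup_between:
  assumes V: "subgroup V G" "openin T V" and A: "subgroup A G" "closedin T A"
    and S: "subgroup S G" "A \<inter> V \<subseteq> S" "S \<subseteq> A"
  shows "closedin T S"
proof -
  have "S = A - (\<Union>a\<in>A - S. (\<otimes>) a ` V)"
  proof (intro equalityI subsetI DiffI)
    fix x assume x: "x \<in> S"
    then show "x \<in> A" using S(3) by blast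
    show "x \<notin> (\<Union>a\<in>A - S. (\<otimes>) a ` V)"
    proof
      assume "x \<in> (\<Union>a\<in>A - S. (\<otimes>) a ` V)"
      then obtain a v where av: "a \<in> A" "a \<notin> S" "v \<in> V" "x = a \<otimes> v" by blast
      have c: "a \<in> carrier G" "v \<in> carrier G" "x \<in> carrier G"
        using subgroup.mem_carrier[OF A(1) av(1)] subgroup.mem_carrier[OF V(1) av(3)]
          subgroup.mem_carrier[OF S(1) x] by auto
      have "v = inv a \<otimes> x" using av(4) c by simp
      then have "v \<in> A" using av(1) x S(3) A(1) by (simp add: subgroup.m_closed subgroup.m_inv_closed subsetD)
      then have "v \<in> S" using av(3) S(2) by blast
      moreover have "a = x \<otimes> inv v" using av(4) c by (simp add: m_assoc)
      ultimately show False using av(2) x S(1) by (simp add: subgroup.m_closed subgroup.m_inv_closed)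
    qed
  next
    fix x assume x: "x \<in> A - (\<Union>a\<in>A - S. (\<otimes>) a ` V)"
    then have "x \<in> carrier G" using subgroup.mem_carrier[OF A(1)] by blast
    then have "x \<in> (\<otimes>) x ` V" using subgroup.one_closed[OF V(1)] by (intro rev_image_eqI[of \<one>]) auto
    then show "x \<in> S" using x by blast
  qed
  moreover have "openin T (\<Union>a\<in>A - S. (\<otimes>) a ` V)"
    using openin_lmult_image[OF _ V(2)] subgroup.mem_carrier[OF A(1)] by blast
  ultimately show ?thesis using closedin_diff[OF A(2)] by metis
qed

lemma finite_if_Int_open_subgroup_trivial:
  assumes N: "subgroup N G" "closedin T N" and V: "subgroup V G" "openin T V"
    and NV: "N \<inter> V \<subseteq> {\<one>}"
  shows "finite N"
proof -
  have N_carrier: "N \<subseteq> carrier G" using subgroup.subset[OF N(1)] .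
  have "compactin T N" using closedin_compact_space[OF compact_space N(2)] .
  moreover have "openin T U" if "U \<in> (\<lambda>x. (\<otimes>) x ` V) ` N" for U
    using that openin_lmult_image[OF _ V(2)] N_carrier by blast
  moreover have "N \<subseteq> \<Union>((\<lambda>x. (\<otimes>) x ` V) ` N)"
  proof
    fix y assume "y \<in> N"
    moreover have "y \<in> (\<otimes>) y ` V"
      using calculation N_carrier subgroup.one_closed[OF V(1)] by (intro rev_image_eqI[of \<one>]) auto
    ultimately show "y \<in> \<Union>((\<lambda>x. (\<otimes>) x ` V) ` N)" by blast
  qed
  ultimately have "\<exists>\<F>. finite \<F> \<and> \<F> \<subseteq> (\<lambda>x. (\<otimes>) x ` V) ` N \<and> N \<subseteq> \<Union>\<F>"
    by (rule compactinD)
  then obtain \<F> where \<F>: "finite \<F>" "\<F> \<subseteq> (\<lambda>x. (\<otimes>) x ` V) ` N" "N \<subseteq> \<Union>\<F>"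
    by blast
  obtain F where F: "F \<subseteq> N" "finite F" "\<F> = (\<lambda>x. (\<otimes>) x ` V) ` F"
    using finite_subset_image[OF \<F>(1,2)] by blast
  have F_cover: "N \<subseteq> \<Union>((\<lambda>x. (\<otimes>) x ` V) ` F)" using \<F>(3) F(3) by simp
  have "N \<subseteq> F"
  proof
    fix y assume y: "y \<in> N"
    then obtain x v where xv: "x \<in> F" "v \<in> V" "y = x \<otimes> v" using F_cover by blast
    have x: "x \<in> N" "x \<in> carrier G" using xv(1) F(1) N_carrier by auto
    have "v \<in> carrier G" using xv(2) subgroup.mem_carrier[OF V(1)] by blast
    then have "v = inv x \<otimes> y" using xv(3) x(2) by simp
    then have "v \<in> N" using x(1) y N(1) by (simp add: subgroup.m_closed subgroup.m_inv_closed)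
    then have "v = \<one>" using xv(2) NV by blast
    then show "y \<in> F" using xv x(2) by simp
  qed
  then show ?thesis using F(2) finite_subset by blast
qed

lemma closedin_diff_of_finite_complement:
  assumes N: "subgroup N G" "finite N" and L: "subgroup L G" "closedin T L"
    and NL: "N \<inter> L = {\<one>}" "N <#> L = A"
  shows "closedin T (A - L)"
proof -
  have "A - L = (\<Union>n\<in>N - {\<one>}. (\<otimes>) n ` L)"
  proof (intro equalityI subsetI)
    fix a assume a: "a \<in> A - L"
    then obtain n l where nl: "n \<in> N" "l \<in> L" "a = n \<otimes> l"
      using NL(2) unfolding set_mult_def by blast
    have "n \<noteq> \<one>" using a nl subgroup.mem_carrier[OF L(1)] by auto
    then show "a \<in> (\<Union>n\<in>N - {\<one>}. (\<otimes>) n ` L)" using nl by blast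
  next
    fix a assume "a \<in> (\<Union>n\<in>N - {\<one>}. (\<otimes>) n ` L)"
    then obtain n l where nl: "n \<in> N" "n \<noteq> \<one>" "l \<in> L" "a = n \<otimes> l" by blast
    have c: "n \<in> carrier G" "l \<in> carrier G"
      using nl subgroup.mem_carrier[OF N(1)] subgroup.mem_carrier[OF L(1)] by auto
    have "a \<in> A" using nl NL(2) unfolding set_mult_def by blast
    moreover have "a \<notin> L"
    proof
      assume "a \<in> L"
      moreover have "n = a \<otimes> inv l" using nl(4) c by (simp add: m_assoc)
      ultimately have "n \<in> L" using nl(3) L(1) by (simp add: subgroup.m_closed subgroup.m_inv_closed)
      then show False using nl(1,2) NL(1) by blast
    qed
    ultimately show "a \<in> A - L" by blast
  qed
  moreover have "closedin T (\<Union>n\<in>N - {\<one>}. (\<otimes>) n ` L)"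
    using closedin_lmult_image[OF _ L(2)] subgroup.mem_carrier[OF N(1)] N(2)
    by (intro closedin_Union) auto
  ultimately show ?thesis by simp
qed

lemma in_closure_ofI:
  assumes x: "x \<in> carrier G"
    and meets: "\<And>U. openin T U \<Longrightarrow> \<one> \<in> U \<Longrightarrow> S \<inter> (\<otimes>) x ` U \<noteq> {}"
  shows "x \<in> T closure_of S"
  unfolding in_closure_of
proof (intro conjI allI impI)
  show "x \<in> topspace T" using x by simp
  fix W assume W: "x \<in> W \<and> openin T W"
  let ?U = "{z \<in> topspace T. x \<otimes> z \<in> W}"
  have "openin T ?U" using openin_continuous_map_preimage[OF continuous_map_lmult[OF x]] W by blast
  moreover have "\<one> \<in> ?U" using W x by simp
  ultimately show "\<exists>y. y \<in> S \<and> y \<in> W" using meets by blast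
qed

end

subsection \<open>Closed abelian normal subgroups of profinite C-groups\<close>

locale profinite_C = profinite +
  assumes complement_exists:
    "\<And>H. closed_subgroup G T H \<Longrightarrow> \<exists>K. closed_subgroup G T K \<and> permutable_complement G H K"

locale closed_abelian_normal = profinite_C +
  fixes A :: "'a set"
  assumes A_normal: "A \<lhd> G" and A_closed: "closedin T A"
    and A_comm: "\<And>x y. x \<in> A \<Longrightarrow> y \<in> A \<Longrightarrow> x \<otimes> y = y \<otimes> x"
begin

lemma A_subgroup: "subgroup A G"
  using normal_imp_subgroup[OF A_normal] .

lemma A_carrier: "A \<subseteq> carrier G"
  using subgroup.subset[OF A_subgroup] .

lemma Int_complement_normal:
  assumes M: "subgroup M G" "M \<subseteq> A" and K: "subgroup K G" "M <#> K = carrier G"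
  shows "A \<inter> K \<lhd> G"
proof (rule normal_invI[OF subgroups_Inter_pair[OF A_subgroup K(1)]])
  fix g l assume g: "g \<in> carrier G" and l: "l \<in> A \<inter> K"
  then obtain m k where mk: "m \<in> M" "k \<in> K" "g = m \<otimes> k"
    using K(2) unfolding set_mult_def by blast
  have c: "m \<in> carrier G" "k \<in> carrier G" "l \<in> carrier G"
    using mk l K(1) M(1) A_carrier subgroup.mem_carrier by auto
  define z where "z = k \<otimes> l \<otimes> inv k"
  have "z \<in> A" using normal.inv_op_closed2[OF A_normal c(2)] l unfolding z_def by blast
  moreover have "z \<in> K"
    using l mk(2) K(1) unfolding z_def by (simp add: subgroup.m_closed subgroup.m_inv_closed)
  ultimately have z: "z \<in> A" "z \<in> K" "z \<in> carrier G" using A_carrier by auto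
  have "g \<otimes> l \<otimes> inv g = m \<otimes> z \<otimes> inv m"
    using mk(3) c by (simp add: z_def m_assoc inv_mult_group)
  also have "\<dots> = z \<otimes> m \<otimes> inv m"
    using A_comm[of m z] mk(1) M(2) z by auto
  also have "\<dots> = z" using z c(1) by (simp add: m_assoc)
  finally show "g \<otimes> l \<otimes> inv g \<in> A \<inter> K" using z by simp
qed

lemma normal_complement:
  assumes M: "subgroup M G" "closedin T M" "M \<subseteq> A"
  obtains L where "L \<lhd> G" "closedin T L" "M \<inter> L = {\<one>}" "M <#> L = A"
proof -
  obtain K where K: "subgroup K G" "closedin T K" "M <#> K = carrier G" "M \<inter> K = {\<one>}"
    using complement_exists[of M] M unfolding closed_subgroup_def permutable_complement_def
    by blast
  define L where "L = A \<inter> K"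
  have L_subgroup: "subgroup L G" unfolding L_def using subgroups_Inter_pair[OF A_subgroup K(1)] .
  have "L \<lhd> G" unfolding L_def using Int_complement_normal[OF M(1,3) K(1,3)] .
  moreover have "closedin T L" unfolding L_def using closedin_Int[OF A_closed K(2)] .
  moreover have "M \<inter> L = {\<one>}"
    using K(4) subgroup.one_closed[OF L_subgroup] unfolding L_def by blast
  moreover have "M <#> L = A"
  proof
    show "M <#> L \<subseteq> A"
      using set_mult_subset_subgroup[OF A_subgroup M(3)] L_def by blast
    show "A \<subseteq> M <#> L"
    proof
      fix a assume a: "a \<in> A"
      then obtain m k where mk: "m \<in> M" "k \<in> K" "a = m \<otimes> k"
        using K(3) A_carrier unfolding set_mult_def by blast
      have c: "m \<in> carrier G" "k \<in> carrier G"
        using mk K(1) M(1) subgroup.mem_carrier by metis+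
      have "k = inv m \<otimes> a" using mk(3) c by simp
      then have "k \<in> A"
        using a mk(1) M(3) A_subgroup by (simp add: subgroup.m_closed subgroup.m_inv_closed subsetD)
      then show "a \<in> M <#> L" using mk unfolding L_def set_mult_def by blast
    qed
  qed
  ultimately show ?thesis using that by blast
qed

(* A nontrivial proper H would split N: for a complement L1 of H and a complement L2 of N \<inter> L1,
   the G-invariant subgroups N \<inter> L1 and N \<inter> L2 are nontrivial and meet trivially. *)
lemma subgroups_trivial_if_normal_meet:
  assumes N: "N \<lhd> G" "closedin T N" "finite N" "N \<subseteq> A"
    and meet: "\<And>Y1 Y2. Y1 \<lhd> G \<Longrightarrow> Y2 \<lhd> G \<Longrightarrow> Y1 \<subseteq> N \<Longrightarrow> Y2 \<subseteq> N \<Longrightarrow>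
      Y1 \<inter> Y2 = {\<one>} \<Longrightarrow> Y1 = {\<one>} \<or> Y2 = {\<one>}"
    and H: "subgroup H G" "H \<subseteq> N"
  shows "H = {\<one>} \<or> H = N"
proof (rule ccontr)
  assume nontrivial: "\<not> (H = {\<one>} \<or> H = N)"
  have N_subgroup: "subgroup N G" using normal_imp_subgroup[OF N(1)] .
  have "closedin T H"
    using closedin_finite[OF finite_subset[OF H(2) N(3)]] H(2) subgroup.subset[OF N_subgroup] by blast
  then obtain L1 where L1: "L1 \<lhd> G" "closedin T L1" "H \<inter> L1 = {\<one>}" "H <#> L1 = A"
    using normal_complement[OF H(1)] H(2) N(4) by blast
  define N1 where "N1 = N \<inter> L1"
  have N1: "N1 \<lhd> G" "closedin T N1" "N1 \<subseteq> N"
    unfolding N1_def using normal_subgroup_intersect[OF N(1) L1(1)] closedin_Int[OF N(2) L1(2)] by auto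
  have L1_carrier: "L1 \<subseteq> carrier G" using subgroup.subset[OF normal_imp_subgroup[OF L1(1)]] .
  have "N1 \<noteq> {\<one>}"
  proof
    assume "N1 = {\<one>}"
    then have "N \<subseteq> H"
      using set_mult_Int_trivial[OF N_subgroup H(2) L1_carrier] L1(4) N(4) unfolding N1_def by blast
    then show False using nontrivial H(2) by blast
  qed
  obtain L2 where L2: "L2 \<lhd> G" "closedin T L2" "N1 \<inter> L2 = {\<one>}" "N1 <#> L2 = A"
    using normal_complement[OF normal_imp_subgroup[OF N1(1)] N1(2)] N1(3) N(4) by blast
  define N2 where "N2 = N \<inter> L2"
  have N2: "N2 \<lhd> G" "N2 \<subseteq> N"
    unfolding N2_def using normal_subgroup_intersect[OF N(1) L2(1)] by auto
  have L2_carrier: "L2 \<subseteq> carrier G" using subgroup.subset[OF normal_imp_subgroup[OF L2(1)]] .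
  have "N2 \<noteq> {\<one>}"
  proof
    assume "N2 = {\<one>}"
    then have "N \<subseteq> N1"
      using set_mult_Int_trivial[OF N_subgroup N1(3) L2_carrier] L2(4) N(4) unfolding N2_def by blast
    then have "H \<subseteq> H \<inter> L1" using H(2) unfolding N1_def by blast
    then show False using nontrivial L1(3) subgroup.one_closed[OF H(1)] by blast
  qed
  moreover have "N1 \<inter> N2 = {\<one>}"
    using L2(3) subgroup.one_closed[OF normal_imp_subgroup[OF N1(1)]]
      subgroup.one_closed[OF normal_imp_subgroup[OF N2(1)]] unfolding N2_def by blast
  ultimately show False using meet[OF N1(1) N2(1) N1(3) N2(2)] \<open>N1 \<noteq> {\<one>}\<close> by blast
qed

definition prime_index_normal :: "'a set \<Rightarrow> bool" where
  "prime_index_normal L \<longleftrightarrow> L \<lhd> G \<and> closedin T L \<and> has_prime_complement G A L"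

lemma exists_prime_index_normal_avoiding:
  assumes d: "d \<in> A" "d \<noteq> \<one>"
  obtains L where "prime_index_normal L" "d \<notin> L"
proof -
  obtain V where V: "V \<lhd> G" "openin T V" "d \<notin> V"
    using open_normal_subgroup_avoiding[of d] d A_carrier by blast
  have V_subgroup: "subgroup V G" using normal_imp_subgroup[OF V(1)] .
  obtain L where L: "L \<lhd> G" "A \<inter> V \<subseteq> L" "L \<subseteq> A" "d \<notin> L"
    and L_max: "\<And>L'. L' \<lhd> G \<Longrightarrow> L \<subseteq> L' \<Longrightarrow> L' \<subseteq> A \<Longrightarrow> d \<notin> L' \<Longrightarrow> L' = L"
    using exists_maximal_normal_avoiding[OF normal_subgroup_intersect[OF A_normal V(1)], of A d] V(3)
    by blast
  have L_subgroup: "subgroup L G" using normal_imp_subgroup[OF L(1)] .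
  have L_closed: "closedin T L"
    using closedin_subgroup_between[OF V_subgroup V(2) A_subgroup A_closed L_subgroup L(2,3)] .
  obtain N where N: "N \<lhd> G" "closedin T N" "L \<inter> N = {\<one>}" "L <#> N = A"
    using normal_complement[OF L_subgroup L_closed L(3)] by blast
  have N_subgroup: "subgroup N G" using normal_imp_subgroup[OF N(1)] .
  have N_A: "N \<subseteq> A" using set_mult_subset_right[OF L_subgroup subgroup.subset[OF N_subgroup]] N(4) by blast
  have "N \<inter> V \<subseteq> {\<one>}" using N(3) N_A L(2) by blast
  then have N_finite: "finite N"
    using finite_if_Int_open_subgroup_trivial[OF N_subgroup N(2) V_subgroup V(2)] by blast
  have "N \<noteq> {\<one>}"
  proof
    assume "N = {\<one>}"
    then have "A = L" using N(4) coset_mult_one[OF subgroup.subset[OF L_subgroup]] by (simp add: r_coset_eq_set_mult)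
    then show False using d(1) L(4) by blast
  qed
  then have "Factorial_Ring.prime (card N)"
    using prime_card_if_subgroups_trivial[OF N_subgroup N_finite]
      subgroups_trivial_if_normal_meet[OF N(1,2) N_finite N_A
        complement_normal_subgroups_meet[OF A_subgroup L(1,3,4) L_max N_subgroup N_A N(3)]]
    by blast
  moreover have "N <#> L = A" using commut_normal[OF N_subgroup L(1)] N(4) by simp
  ultimately have "has_prime_complement G A L"
    unfolding has_prime_complement_def using N_subgroup N(3) by blast
  then show ?thesis using that L(1,4) L_closed unfolding prime_index_normal_def by blast
qed

definition irredundant :: "'a set set \<Rightarrow> bool" where
  "irredundant \<L> \<longleftrightarrow> (\<forall>L\<in>\<L>. prime_index_normal L) \<and>
     (\<forall>L\<in>\<L>. \<forall>F. finite F \<longrightarrow> F \<subseteq> \<L> - {L} \<longrightarrow> \<not> A \<inter> \<Inter>F \<subseteq> L)"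

lemma normal_Int_Inter:
  assumes "\<And>L. L \<in> F \<Longrightarrow> L \<lhd> G"
  shows "A \<inter> \<Inter>F \<lhd> G"
proof (rule normal_invI)
  have "subgroup H G" if "H \<in> insert A F" for H
    using that A_subgroup normal_imp_subgroup[OF assms] by blast
  then have "subgroup (\<Inter>(insert A F)) G" by (intro subgroups_Inter) auto
  then show "subgroup (A \<inter> \<Inter>F) G" by simp
  fix x h assume x: "x \<in> carrier G" and h: "h \<in> A \<inter> \<Inter>F"
  have "x \<otimes> h \<otimes> inv x \<in> L" if "L \<in> F" for L
    using normal.inv_op_closed2[OF assms[OF that] x] h that by blast
  moreover have "x \<otimes> h \<otimes> inv x \<in> A" using normal.inv_op_closed2[OF A_normal x] h by blast
  ultimately show "x \<otimes> h \<otimes> inv x \<in> A \<inter> \<Inter>F" by blast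
qed

lemma irredundantD:
  "irredundant \<L> \<Longrightarrow> L \<in> \<L> \<Longrightarrow> finite F \<Longrightarrow> F \<subseteq> \<L> - {L} \<Longrightarrow> \<not> A \<inter> \<Inter>F \<subseteq> L"
  unfolding irredundant_def by blast

lemma irredundant_prime_index_normal: "irredundant \<L> \<Longrightarrow> L \<in> \<L> \<Longrightarrow> prime_index_normal L"
  unfolding irredundant_def by blast

lemma exists_maximal_irredundant:
  obtains \<L> where "irredundant \<L>" "\<And>\<L>'. irredundant \<L>' \<Longrightarrow> \<L> \<subseteq> \<L>' \<Longrightarrow> \<L>' = \<L>"
proof -
  have "\<exists>\<L>\<in>Collect irredundant. \<forall>\<L>'\<in>Collect irredundant. \<L> \<subseteq> \<L>' \<longrightarrow> \<L>' = \<L>"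
  proof (rule subset_Zorn_nonempty)
    have "irredundant {}" unfolding irredundant_def by simp
    then show "Collect irredundant \<noteq> {}" by blast
    fix \<C> assume \<C>: "\<C> \<noteq> {}" "subset.chain (Collect irredundant) \<C>"
    have members: "irredundant \<L>" if "\<L> \<in> \<C>" for \<L>
      using that \<C>(2) unfolding subset_chain_def by blast
    have "irredundant (\<Union>\<C>)"
      unfolding irredundant_def
    proof (intro conjI ballI allI impI)
      fix L assume "L \<in> \<Union>\<C>"
      then obtain \<L> where "\<L> \<in> \<C>" "L \<in> \<L>" by blast
      then show "prime_index_normal L" using irredundant_prime_index_normal[OF members] by blast
    next
      fix L F assume L: "L \<in> \<Union>\<C>" and F: "finite F" "F \<subseteq> \<Union>\<C> - {L}"
      obtain \<L> where \<L>: "\<L> \<in> \<C>" "insert L F \<subseteq> \<L>"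
        using finite_subset_Union_chain[of "insert L F" \<C> "Collect irredundant"] \<C> L F by blast
      then show "\<not> A \<inter> \<Inter>F \<subseteq> L"
        using irredundantD[OF members[OF \<L>(1)] _ F(1)] F(2) by blast
    qed
    then show "\<Union>\<C> \<in> Collect irredundant" by simp
  qed
  then obtain \<L> where "irredundant \<L>" "\<forall>\<L>'\<in>Collect irredundant. \<L> \<subseteq> \<L>' \<longrightarrow> \<L>' = \<L>"
    by blast
  then show ?thesis by (intro that) auto
qed

lemma irredundant_normal: "irredundant \<L> \<Longrightarrow> L \<in> \<L> \<Longrightarrow> L \<lhd> G"
  using irredundant_prime_index_normal unfolding prime_index_normal_def by blast

lemma irredundant_insert:
  assumes irr: "irredundant \<L>" and L0: "prime_index_normal L0"
    and d: "d \<in> A \<inter> \<Inter>\<L>" "d \<notin> L0"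
  shows "irredundant (insert L0 \<L>)"
  unfolding irredundant_def
proof (intro conjI ballI allI impI notI)
  fix L assume "L \<in> insert L0 \<L>"
  then show "prime_index_normal L" using L0 irredundant_prime_index_normal[OF irr] by blast
next
  fix L F assume L: "L \<in> insert L0 \<L>" and F: "finite F" "F \<subseteq> insert L0 \<L> - {L}"
    and contained: "A \<inter> \<Inter>F \<subseteq> L"
  show False
  proof (cases "L = L0")
    case True
    then have "d \<in> A \<inter> \<Inter>F" using d F(2) by blast
    then show False using contained d(2) True by blast
  next
    case False
    then have L_in: "L \<in> \<L>" using L by blast
    define B where "B = A \<inter> \<Inter>(F - {L0})"
    have "L' \<lhd> G" if "L' \<in> F - {L0}" for L' using that F(2) irredundant_normal[OF irr] by blast
    then have "B \<lhd> G" unfolding B_def by (rule normal_Int_Inter)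
    then have B: "subgroup B G" "B \<subseteq> A" unfolding B_def using normal_imp_subgroup by auto
    have "finite (F - {L0})" "F - {L0} \<subseteq> \<L> - {L}" using F by auto
    then have not_contained: "\<not> B \<subseteq> L"
      unfolding B_def by (rule irredundantD[OF irr L_in])
    have "B \<inter> L0 \<subseteq> B \<inter> L" using contained F(2) unfolding B_def by blast
    moreover have "d \<in> B \<inter> L" using d F(2) L_in unfolding B_def by blast
    then have "\<not> B \<inter> L \<subseteq> L0" using d(2) by blast
    moreover have "subgroup (B \<inter> L) G"
      using subgroups_Inter_pair[OF B(1) normal_imp_subgroup[OF irredundant_normal[OF irr L_in]]] .
    moreover have "L0 \<lhd> G" "has_prime_complement G A L0"
      using L0 unfolding prime_index_normal_def by auto
    ultimately have "B \<inter> L = B"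
      using subgroup_Int_maximal[OF _ _ A_subgroup B, of L0 "B \<inter> L"] by blast
    then show False using not_contained by blast
  qed
qed

lemma maximal_irredundant_Inter:
  assumes irr: "irredundant \<L>" and max: "\<And>\<L>'. irredundant \<L>' \<Longrightarrow> \<L> \<subseteq> \<L>' \<Longrightarrow> \<L>' = \<L>"
  shows "A \<inter> \<Inter>\<L> = {\<one>}"
proof -
  have "d = \<one>" if d: "d \<in> A \<inter> \<Inter>\<L>" for d
  proof (rule ccontr)
    assume "d \<noteq> \<one>"
    then obtain L0 where L0: "prime_index_normal L0" "d \<notin> L0"
      using exists_prime_index_normal_avoiding d by blast
    have "insert L0 \<L> = \<L>"
      using max[OF irredundant_insert[OF irr L0(1) d L0(2)] subset_insertI] .
    then show False using L0(2) d by blast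
  qed
  moreover have "\<one> \<in> A \<inter> \<Inter>\<L>"
    using normal_imp_subgroup[OF normal_Int_Inter[OF irredundant_normal[OF irr]]] subgroup.one_closed
    by blast
  ultimately show ?thesis by blast
qed

end

subsection \<open>Cofactors of a separating irredundant family\<close>

locale separating_family = closed_abelian_normal +
  fixes \<L> :: "'a set set"
  assumes irredundant: "irredundant \<L>" and Inter_trivial: "A \<inter> \<Inter>\<L> = {\<one>}"
begin

definition cofactor :: "'a set \<Rightarrow> 'a set" where
  "cofactor L = A \<inter> \<Inter>(\<L> - {L})"

lemma member_normal: "L \<in> \<L> \<Longrightarrow> L \<lhd> G"
  using irredundant_normal[OF irredundant] .

lemma member_closed: "L \<in> \<L> \<Longrightarrow> closedin T L"
  using irredundant_prime_index_normal[OF irredundant] unfolding prime_index_normal_def by blast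

lemma member_prime_complement:
  assumes "L \<in> \<L>"
  obtains N where "subgroup N G" "Factorial_Ring.prime (card N)" "N \<inter> L = {\<one>}" "N <#> L = A"
  using irredundant_prime_index_normal[OF irredundant assms]
  unfolding prime_index_normal_def has_prime_complement_def by blast

lemma cofactor_normal: "cofactor L \<lhd> G"
  unfolding cofactor_def using member_normal by (intro normal_Int_Inter) blast

lemma cofactor_subgroup: "subgroup (cofactor L) G"
  using normal_imp_subgroup[OF cofactor_normal] .

lemma cofactor_subset_A: "cofactor L \<subseteq> A"
  unfolding cofactor_def by blast

lemma cofactor_subset_member: "L' \<in> \<L> \<Longrightarrow> L' \<noteq> L \<Longrightarrow> cofactor L \<subseteq> L'"
  unfolding cofactor_def by blast

lemma cofactor_closed: "closedin T (cofactor L)"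
proof -
  have "closedin T (\<Inter>(insert A (\<L> - {L})))"
    using A_closed member_closed by (intro closedin_Inter) auto
  then show ?thesis unfolding cofactor_def by simp
qed

lemma cofactor_Int_member: "L \<in> \<L> \<Longrightarrow> cofactor L \<inter> L = {\<one>}"
  using Inter_trivial subgroup.one_closed[OF cofactor_subgroup]
    subgroup.one_closed[OF normal_imp_subgroup[OF member_normal]]
  unfolding cofactor_def by blast

lemma cofactor_not_subset_member:
  assumes L: "L \<in> \<L>"
  shows "\<not> cofactor L \<subseteq> L"
proof
  assume contained: "cofactor L \<subseteq> L"
  obtain N where N: "subgroup N G" "Factorial_Ring.prime (card N)" "N \<inter> L = {\<one>}" "N <#> L = A"
    using member_prime_complement[OF L] .
  have "finite N" using N(2) card_ge_0_finite prime_gt_0_nat by blast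
  then have "closedin T (A - L)"
    using closedin_diff_of_finite_complement[OF N(1) _ normal_imp_subgroup[OF member_normal[OF L]]
        member_closed[OF L] N(3,4)] by blast
  then have "openin T (topspace T - (A - L))" by blast
  moreover have "A \<inter> \<Inter>(\<L> - {L}) \<subseteq> topspace T - (A - L)"
    using contained A_carrier unfolding cofactor_def by auto
  ultimately obtain F where F: "finite F" "F \<subseteq> \<L> - {L}" "A \<inter> \<Inter>F \<subseteq> topspace T - (A - L)"
    using compact_space_Inter_subset_openin[OF compact_space A_closed, of "\<L> - {L}"] member_closed
    by (metis DiffD1)
  then have "A \<inter> \<Inter>F \<subseteq> L" by blast
  then show False using irredundantD[OF irredundant L F(1,2)] by blast
qed

lemma member_set_mult_cofactor:
  assumes L: "L \<in> \<L>"
  shows "L <#> cofactor L = A"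
proof -
  obtain N where N: "subgroup N G" "Factorial_Ring.prime (card N)" "N <#> L = A"
    using member_prime_complement[OF L] by blast
  have L_subgroup: "subgroup L G" using normal_imp_subgroup[OF member_normal[OF L]] .
  show ?thesis
  proof (rule prime_complement_maximal[OF N(1,2) L_subgroup])
    show "A \<subseteq> N <#> L" using N(3) by simp
    show "subgroup (L <#> cofactor L) G"
      using mult_norm_subgroup[OF member_normal[OF L] cofactor_subgroup] .
    show "L \<subseteq> L <#> cofactor L"
      using set_mult_subset_left[OF cofactor_subgroup subgroup.subset[OF L_subgroup]] .
    have "L \<subseteq> A"
      using set_mult_subset_right[OF N(1) subgroup.subset[OF L_subgroup]] N(3) by simp
    then show "L <#> cofactor L \<subseteq> A"
      using set_mult_subset_subgroup[OF A_subgroup _ cofactor_subset_A] by blast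
    show "\<not> L <#> cofactor L \<subseteq> L"
      using set_mult_subset_right[OF L_subgroup subgroup.subset[OF cofactor_subgroup]]
        cofactor_not_subset_member[OF L] by blast
  qed
qed

lemma prime_card_cofactor:
  assumes L: "L \<in> \<L>"
  shows "Factorial_Ring.prime (card (cofactor L))"
proof -
  obtain N where N: "subgroup N G" "Factorial_Ring.prime (card N)" "N \<inter> L = {\<one>}" "N <#> L = A"
    using member_prime_complement[OF L] .
  have L_subgroup: "subgroup L G" using normal_imp_subgroup[OF member_normal[OF L]] .
  have N_finite: "finite N" using N(2) card_ge_0_finite prime_gt_0_nat by blast
  have "cofactor L \<inter> L \<subseteq> {\<one>}" using cofactor_Int_member[OF L] by simp
  moreover have "cofactor L \<subseteq> L <#> N"
    using commut_normal[OF N(1) member_normal[OF L]] N(4) cofactor_subset_A by simp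
  ultimately have cofactor: "finite (cofactor L)" "card (cofactor L) \<le> card N"
    using card_le_of_complement[OF L_subgroup cofactor_subgroup _ _ subgroup.subset[OF N(1)] N_finite]
    by auto
  have "N \<subseteq> A" using set_mult_subset_left[OF L_subgroup subgroup.subset[OF N(1)]] N(4) by simp
  then have "N \<inter> L \<subseteq> {\<one>}" "N \<subseteq> L <#> cofactor L"
    using N(3) member_set_mult_cofactor[OF L] by simp_all
  then have "card N \<le> card (cofactor L)"
    using card_le_of_complement[OF L_subgroup N(1) _ _ subgroup.subset[OF cofactor_subgroup] cofactor(1)]
    by auto
  then show ?thesis using N(2) cofactor(2) by simp
qed

lemma generate_cofactors_subset: "generate G (\<Union>(cofactor ` \<L>)) \<subseteq> A"
  using generate_subgroup_incl[OF _ A_subgroup] cofactor_subset_A by blast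

lemma generate_cofactors_set_mult_Inter:
  assumes "finite F" "F \<subseteq> \<L>"
  shows "A \<subseteq> generate G (\<Union>(cofactor ` \<L>)) <#> (A \<inter> \<Inter>F)"
  using assms
proof (induction F rule: finite_subset_induct')
  case empty
  have "subgroup (generate G (\<Union>(cofactor ` \<L>))) G"
    using generate_is_subgroup cofactor_subset_A A_carrier by blast
  then show ?case using set_mult_subset_right[OF _ A_carrier] by simp
next
  case (insert L F)
  let ?S = "generate G (\<Union>(cofactor ` \<L>))"
  have S_subgroup: "subgroup ?S G"
    using generate_is_subgroup cofactor_subset_A A_carrier by blast
  have AF_subgroup: "subgroup (A \<inter> \<Inter>F) G"
    using normal_imp_subgroup[OF normal_Int_Inter] member_normal insert.hyps(3) by blast
  show ?case
  proof
    fix a assume "a \<in> A"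
    then obtain s b where sb: "s \<in> ?S" "b \<in> A \<inter> \<Inter>F" "a = s \<otimes> b"
      using insert.IH unfolding set_mult_def by blast
    have "b \<in> cofactor L <#> L"
      using sb(2) member_set_mult_cofactor[OF insert.hyps(2)]
        commut_normal[OF cofactor_subgroup member_normal[OF insert.hyps(2)]] by simp
    then obtain m l where ml: "m \<in> cofactor L" "l \<in> L" "b = m \<otimes> l"
      unfolding set_mult_def by blast
    have "m \<in> \<Union>(cofactor ` \<L>)" using ml(1) insert.hyps(2) by blast
    then have m: "m \<in> A \<inter> \<Inter>F" "m \<in> ?S" "m \<in> carrier G"
      using ml(1) insert.hyps(3,4) A_carrier generate.incl[of m _ G]
      unfolding cofactor_def by auto
    have c: "s \<in> carrier G" "l \<in> carrier G"
      using sb(1) ml(2) subgroup.mem_carrier[OF S_subgroup]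
        subgroup.mem_carrier[OF normal_imp_subgroup[OF member_normal[OF insert.hyps(2)]]] by auto
    have "l = inv m \<otimes> b" using ml(3) m(3) c(2) by simp
    then have "l \<in> A \<inter> \<Inter>F"
      using subgroup.m_closed[OF AF_subgroup subgroup.m_inv_closed[OF AF_subgroup m(1)] sb(2)] by simp
    then have "l \<in> A \<inter> \<Inter>(insert L F)" using ml(2) by blast
    moreover have "s \<otimes> m \<in> ?S" using subgroup.m_closed[OF S_subgroup sb(1) m(2)] .
    moreover have "a = (s \<otimes> m) \<otimes> l" using sb(3) ml(3) c m(3) by (simp add: m_assoc)
    ultimately show "a \<in> ?S <#> (A \<inter> \<Inter>(insert L F))"
      unfolding set_mult_def by blast
  qed
qed

lemma closure_generate_cofactors: "T closure_of generate G (\<Union>(cofactor ` \<L>)) = A"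
proof
  show "T closure_of generate G (\<Union>(cofactor ` \<L>)) \<subseteq> A"
    using closure_of_minimal[OF generate_cofactors_subset A_closed] .
  show "A \<subseteq> T closure_of generate G (\<Union>(cofactor ` \<L>))"
  proof
    fix x assume x: "x \<in> A"
    show "x \<in> T closure_of generate G (\<Union>(cofactor ` \<L>))"
    proof (rule in_closure_ofI)
      show "x \<in> carrier G" using x A_carrier by blast
      fix U assume U: "openin T U" "\<one> \<in> U"
      have "A \<inter> \<Inter>\<L> \<subseteq> U" using Inter_trivial U(2) by simp
      then obtain F where F: "finite F" "F \<subseteq> \<L>" "A \<inter> \<Inter>F \<subseteq> U"
        using compact_space_Inter_subset_openin[OF compact_space A_closed member_closed U(1)] by blast
      have "x \<in> generate G (\<Union>(cofactor ` \<L>)) <#> (A \<inter> \<Inter>F)"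
        using generate_cofactors_set_mult_Inter[OF F(1,2)] x by blast
      then obtain s c where sc: "s \<in> generate G (\<Union>(cofactor ` \<L>))" "c \<in> A \<inter> \<Inter>F" "x = s \<otimes> c"
        unfolding set_mult_def by blast
      have AF_subgroup: "subgroup (A \<inter> \<Inter>F) G"
        using normal_imp_subgroup[OF normal_Int_Inter] member_normal F(2) by blast
      have c: "s \<in> carrier G" "c \<in> carrier G"
        using sc(1,2) generate_cofactors_subset A_carrier by auto
      have "s = x \<otimes> inv c" using sc(3) c by (simp add: m_assoc)
      moreover have "inv c \<in> U" using subgroup.m_inv_closed[OF AF_subgroup sc(2)] F(3) by blast
      ultimately show "generate G (\<Union>(cofactor ` \<L>)) \<inter> (\<otimes>) x ` U \<noteq> {}" using sc(1) by blast
    qed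
  qed
qed

lemma closure_generate_other_cofactors:
  assumes L: "L \<in> \<L>"
  shows "T closure_of generate G (\<Union>(cofactor ` \<L> - {cofactor L})) \<subseteq> A \<inter> L"
proof -
  have "H \<subseteq> A \<inter> L" if H: "H \<in> cofactor ` \<L> - {cofactor L}" for H
  proof -
    obtain L' where "L' \<in> \<L>" "L' \<noteq> L" "H = cofactor L'" using H by blast
    then show ?thesis using cofactor_subset_A cofactor_subset_member[OF L] by blast
  qed
  then have "\<Union>(cofactor ` \<L> - {cofactor L}) \<subseteq> A \<inter> L" by blast
  then have "generate G (\<Union>(cofactor ` \<L> - {cofactor L})) \<subseteq> A \<inter> L"
    using generate_subgroup_incl
      subgroups_Inter_pair[OF A_subgroup normal_imp_subgroup[OF member_normal[OF L]]] by blast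
  then show ?thesis
    using closure_of_minimal[OF _ closedin_Int[OF A_closed member_closed[OF L]]] by blast
qed

theorem internal_cartesian_product_cofactors:
  assumes "\<L> \<noteq> {}"
  shows "internal_cartesian_product G T A (cofactor ` \<L>) (\<lambda>H. H)"
  unfolding internal_cartesian_product_def
proof (intro conjI ballI)
  fix H assume "H \<in> cofactor ` \<L>"
  then show "closedin T H" "H \<lhd> G\<lparr>carrier := A\<rparr>"
    using cofactor_closed normal_restrict_supergroup[OF A_subgroup cofactor_normal cofactor_subset_A]
    by auto
next
  show "A = T closure_of generate G (\<Union>H\<in>cofactor ` \<L>. H)"
    using closure_generate_cofactors by simp
next
  have "(\<Inter>H\<in>cofactor ` \<L>. T closure_of generate G (\<Union>(cofactor ` \<L> - {H}))) \<subseteq> A \<inter> L"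
    if L: "L \<in> \<L>" for L
    using closure_generate_other_cofactors[OF L] L by blast
  then have "(\<Inter>H\<in>cofactor ` \<L>. T closure_of generate G (\<Union>(cofactor ` \<L> - {H}))) \<subseteq> A \<inter> \<Inter>\<L>"
    using assms by blast
  moreover have "\<one> \<in> T closure_of generate G (\<Union>(cofactor ` \<L> - {H}))" for H
  proof -
    have "generate G (\<Union>(cofactor ` \<L> - {H})) \<subseteq> topspace T"
      using generate_in_carrier[of "\<Union>(cofactor ` \<L> - {H})"] cofactor_subset_A A_carrier by auto
    then show ?thesis using closure_of_subset generate.one by blast
  qed
  ultimately show "(\<Inter>H\<in>cofactor ` \<L>. T closure_of generate G (\<Union>J\<in>cofactor ` \<L> - {H}. J)) = {\<one>}"
    using Inter_trivial by auto
qed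

end

theorem (in closed_abelian_normal) prime_order_decomposition:
  assumes nontrivial: "A \<noteq> {\<one>}"
  shows "\<exists>\<H>. (\<forall>H\<in>\<H>. subgroup H G \<and> H \<subseteq> A \<and> G_invariant G H \<and> Factorial_Ring.prime (card H))
           \<and> internal_cartesian_product G T A \<H> (\<lambda>H. H)"
proof -
  obtain \<L> where irr: "irredundant \<L>" and max: "\<And>\<L>'. irredundant \<L>' \<Longrightarrow> \<L> \<subseteq> \<L>' \<Longrightarrow> \<L>' = \<L>"
    using exists_maximal_irredundant by blast
  interpret separating_family G T A \<L>
    using irr maximal_irredundant_Inter[OF irr max] by unfold_locales simp_all
  have "\<L> \<noteq> {}" using Inter_trivial nontrivial by auto
  moreover have "\<forall>H\<in>cofactor ` \<L>. subgroup H G \<and> H \<subseteq> A \<and> G_invariant G H \<and>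
      Factorial_Ring.prime (card H)"
    using cofactor_subgroup cofactor_subset_A normal_imp_G_invariant[OF cofactor_normal]
      prime_card_cofactor by blast
  ultimately show ?thesis using internal_cartesian_product_cofactors by blast
qed

theorem lemma2p9:
  fixes G :: "('a, 'b) monoid_scheme" and T :: "'a topology" and A :: "'a set"
  assumes "profinite_C_group G T"
    and "A \<lhd> G" and "closedin T A"
    and "\<forall>x\<in>A. \<forall>y\<in>A. x \<otimes>\<^bsub>G\<^esub> y = y \<otimes>\<^bsub>G\<^esub> x"
    and "A \<noteq> {\<one>\<^bsub>G\<^esub>}"
  shows "\<exists>\<H>. (\<forall>H\<in>\<H>. subgroup H G \<and> H \<subseteq> A \<and> G_invariant G H \<and> Factorial_Ring.prime (card H))
           \<and> internal_cartesian_product G T A \<H> (\<lambda>H. H)"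
proof -
  interpret closed_abelian_normal G T A
    using assms(1-4) unfolding profinite_C_group_def
    by (intro closed_abelian_normal.intro profinite_C.intro profinite.intro
        profinite_C_axioms.intro closed_abelian_normal_axioms.intro) auto
  show ?thesis using prime_order_decomposition[OF assms(5)] .
qed

end
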